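(* For $0\le i,j\le n-1$, $n\in\mathbb{N}$ and $a,q>0$, $$\frac{Z^{\mathrm{col}}(i,j,a,q,n)}{Z^{\mathrm{col}}_n(a,q)}=\frac{1}{(2\pi\mathrm{i})^2}\int_{\Gamma_0}\int_{\Gamma_0}q^{(i+1)^2+j}\frac{G^{\mathrm{diag}}_{NE}(w,b,a,q)}{w^ib^j}\frac{dw}{w}\frac{db}{b},$$ where $\Gamma_0$ is a contour around the origin.
   Context: $\mathrm{i}=\sqrt{-1}$. Aztec diamond of size $n$: white vertices $\{(x_1,x_2): x_1\text{ odd},\ x_2\text{ even},\ 1\le x_1\le 2n-1,\ 0\le x_2\le 2n\}$, black vertices $\{(x_1,x_2): x_1\text{ even},\ x_2\text{ odd},\ 0\le x_1\le 2n,\ 1\le x_2\le 2n-1\}$, $e_1=(1,1)$, $e_2=(-1,1)$. The $q^{\mathrm{col}}$ weighting: for a black vertex $x=(x_1,x_2)$, the edges to $x\pm e_1$ have weight $1$, the edge to $x+e_2$ has weight $aq^{-2n+x_1-1}$ and the edge to $x-e_2$ has weight $aq^{2n-x_1}$. $Z^{\mathrm{col}}_n(a,q)$ is the sum over perfect matchings of products of weights, and $Z^{\mathrm{col}}(i,j,a,q,n)$ the same for the graph with vertices $(2n-2i-1,2n)$ and $(2n,2n-1-2j)$ removed. The $q^{\mathrm{diag}}$ weighting (with $b=1$): for $0\le k,l\le n-1$, edges $\{(2n-2k-2,2n-2l-1),(2n-2k-1,2n-2l)\}$ and $\{(2n-2k-1,2n-2l-2),(2n-2k,2n-2l-1)\}$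 have weight $1$, edge $\{(2n-2k-1,2n-2l),(2n-2k,2n-2l-1)\}$ has weight $aq^{-2\min(k,l)}$, and edge $\{(2n-2k-2,2n-2l-1),(2n-2k-1,2n-2l-2)\}$ has weight $aq^{2\min(k,l)+1}$; $Z^{\mathrm{diag}}_n(1,a,q)$ and $Z^{\mathrm{diag}}(i,j,a,q,n)$ are the corresponding partition functions (the latter with $(2n-2i-1,2n)$, $(2n,2n-2j-1)$ removed), and $G^{\mathrm{diag}}_{NE}(w,b,a,q)=\sum_{i,j=0}^{n-1}\frac{Z^{\mathrm{diag}}(i,j,a,q,n)}{Z^{\mathrm{diag}}_n(1,a,q)}w^ib^j$. *)

theory Defs
  imports "HOL-Analysis.Analysis" "HOL-Complex_Analysis.Complex_Analysis"
begin

type_synonym vtx = "int \<times> int"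

definition e1 :: vtx where "e1 = (1, 1)"
definition e2 :: vtx where "e2 = (-1, 1)"

definition vadd :: "vtx \<Rightarrow> vtx \<Rightarrow> vtx" where
  "vadd x y = (fst x + fst y, snd x + snd y)"
definition vsub :: "vtx \<Rightarrow> vtx \<Rightarrow> vtx" where
  "vsub x y = (fst x - fst y, snd x - snd y)"

text \<open>White and black vertices of the Aztec diamond of size n.\<close>
definition white_vtx :: "nat \<Rightarrow> vtx set" where
  "white_vtx n = {(x1, x2). odd x1 \<and> even x2 \<and> 1 \<le> x1 \<and> x1 \<le> 2 * int n - 1
                          \<and> 0 \<le> x2 \<and> x2 \<le> 2 * int n}"
definition black_vtx :: "nat \<Rightarrow> vtx set" where
  "black_vtx n = {(x1, x2). even x1 \<and> odd x2 \<and> 0 \<le> x1 \<and> x1 \<le> 2 * int n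
                          \<and> 1 \<le> x2 \<and> x2 \<le> 2 * int n - 1}"

definition adj :: "vtx \<Rightarrow> vtx \<Rightarrow> bool" where
  "adj x y \<longleftrightarrow> y = vadd x e1 \<or> y = vsub x e1 \<or> y = vadd x e2 \<or> y = vsub x e2"

definition perfect_matchings :: "vtx set \<Rightarrow> vtx set \<Rightarrow> (vtx \<times> vtx) set set" where
  "perfect_matchings Bv Wv = {M. M \<subseteq> Bv \<times> Wv \<and> (\<forall>(x, y) \<in> M. adj x y)
      \<and> (\<forall>x\<in>Bv. \<exists>!y. (x, y) \<in> M) \<and> (\<forall>y\<in>Wv. \<exists>!x. (x, y) \<in> M)}"

definition part_fun :: "vtx set \<Rightarrow> vtx set \<Rightarrow> (vtx \<Rightarrow> vtx \<Rightarrow> real) \<Rightarrow> real" where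
  "part_fun Bv Wv wt = (\<Sum>M\<in>perfect_matchings Bv Wv. \<Prod>(x, y)\<in>M. wt x y)"

definition wt_col :: "nat \<Rightarrow> real \<Rightarrow> real \<Rightarrow> vtx \<Rightarrow> vtx \<Rightarrow> real" where
  "wt_col n a q x y =
     (if y = vadd x e1 \<or> y = vsub x e1 then 1
      else if y = vadd x e2 then a * q powi (- 2 * int n + fst x - 1)
      else if y = vsub x e2 then a * q powi (2 * int n - fst x)
      else 0)"

text \<open>q^diag weighting with b = 1. For a black vertex x = (x1,x2) the indices are
  l = (2n-1-x2)/2 and k = (2n-2-x1)/2 for the edges to x+e1, x-e2
  (black vertex (2n-2k-2, 2n-2l-1)), resp. k = (2n-x1)/2 for the edges to x-e1, x+e2
  (black vertex (2n-2k, 2n-2l-1)).\<close>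
definition wt_diag :: "nat \<Rightarrow> real \<Rightarrow> real \<Rightarrow> vtx \<Rightarrow> vtx \<Rightarrow> real" where
  "wt_diag n a q x y =
     (let l = (2 * int n - 1 - snd x) div 2 in
      if y = vadd x e1 \<or> y = vsub x e1 then 1
      else if y = vadd x e2 then
        (let k = (2 * int n - fst x) div 2 in a * q powi (- 2 * min k l))
      else if y = vsub x e2 then
        (let k = (2 * int n - 2 - fst x) div 2 in a * q powi (2 * min k l + 1))
      else 0)"

definition Z_col :: "nat \<Rightarrow> real \<Rightarrow> real \<Rightarrow> real" where
  "Z_col n a q = part_fun (black_vtx n) (white_vtx n) (wt_col n a q)"

definition Z_col_rm :: "nat \<Rightarrow> nat \<Rightarrow> real \<Rightarrow> real \<Rightarrow> nat \<Rightarrow> real" where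
  "Z_col_rm i j a q n =
     part_fun (black_vtx n - {(2 * int n, 2 * int n - 1 - 2 * int j)})
              (white_vtx n - {(2 * int n - 2 * int i - 1, 2 * int n)}) (wt_col n a q)"

definition Z_diag :: "nat \<Rightarrow> real \<Rightarrow> real \<Rightarrow> real" where
  "Z_diag n a q = part_fun (black_vtx n) (white_vtx n) (wt_diag n a q)"

definition Z_diag_rm :: "nat \<Rightarrow> nat \<Rightarrow> real \<Rightarrow> real \<Rightarrow> nat \<Rightarrow> real" where
  "Z_diag_rm i j a q n =
     part_fun (black_vtx n - {(2 * int n, 2 * int n - 2 * int j - 1)})
              (white_vtx n - {(2 * int n - 2 * int i - 1, 2 * int n)}) (wt_diag n a q)"

definition G_diag_NE :: "nat \<Rightarrow> complex \<Rightarrow> complex \<Rightarrow> real \<Rightarrow> real \<Rightarrow> complex" where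
  "G_diag_NE n w b a q =
     (\<Sum>i<n. \<Sum>j<n. complex_of_real (Z_diag_rm i j a q n / Z_diag n a q) * w ^ i * b ^ j)"

end

theory Submission
  imports Defs
begin

text \<open>The q^col and q^diag weightings are gauge equivalent. Let d(p) = (p2 - p1 + 1)/2 index
  the diagonal through a vertex p, and let phi(t) = t^2 for t > 0 and phi(t) = t otherwise. Along
  +-e1 edges d is constant, along +-e2 edges it changes by one, and then
  wt_col(x, y) = q^(phi(d x) - phi(d y)) * wt_diag(x, y) for every edge. A gauge transformation
  multiplies every perfect matching by the same product of vertex factors, so in the ratio of a
  partition function with two boundary vertices removed to the full one all factors cancel except
  those of the removed vertices, which give q^((i+1)^2 + j). The double contour integral then
  extracts the coefficient of w^i b^j of the polynomial G by Cauchy's formula.\<close>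

definition diag_index :: "vtx \<Rightarrow> int" where
  "diag_index p = (snd p - fst p + 1) div 2"

definition gauge_exp :: "int \<Rightarrow> int" where
  "gauge_exp t = (if t > 0 then t^2 else t)"

lemma gauge_exp_Suc: "gauge_exp (t + 1) = gauge_exp t + 2 * max 0 t + 1"
  by (simp add: gauge_exp_def power2_eq_square algebra_simps)

lemma wt_col_gauge:
  assumes x: "even (fst x)" "odd (snd x)" and "adj x y" and q: "q \<noteq> 0"
  shows "wt_col n a q x y =
    q powi (gauge_exp (diag_index x) - gauge_exp (diag_index y)) * wt_diag n a q x y"
proof -
  obtain u v where uv: "x = (2 * u, 2 * v + 1)"
    using x by (metis evenE oddE prod.collapse)
  define t where "t = v - u + 1"
  have dx: "diag_index x = t" unfolding diag_index_def uv t_def by simp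
  have ne: "vadd x e1 \<noteq> vadd x e2" "vadd x e1 \<noteq> vsub x e2"
    "vsub x e1 \<noteq> vadd x e2" "vsub x e1 \<noteq> vsub x e2" "vadd x e2 \<noteq> vsub x e2"
    by (auto simp: vadd_def vsub_def e1_def e2_def)
  define D where "D = gauge_exp (diag_index x) - gauge_exp (diag_index y)"
  from \<open>adj x y\<close> consider "y = vadd x e1 \<or> y = vsub x e1" | "y = vadd x e2" | "y = vsub x e2"
    unfolding adj_def by blast
  then show ?thesis
  proof cases
    case 1
    then have "diag_index y = t"
      by (auto simp: diag_index_def uv t_def vadd_def vsub_def e1_def)
    with 1 dx show ?thesis by (auto simp: wt_col_def wt_diag_def)
  next
    case 2
    define m where "m = min ((2 * int n - fst x) div 2) ((2 * int n - 1 - snd x) div 2)"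
    have "diag_index y = t + 1"
      unfolding 2 diag_index_def uv t_def by (simp add: vadd_def e2_def)
    then have "- 2 * int n + fst x - 1 = D + - 2 * m"
      using gauge_exp_Suc[of t] dx by (simp add: D_def m_def uv t_def) arith
    then have "wt_col n a q x y = q powi D * (a * q powi (- 2 * m))"
      using 2 ne q by (simp add: wt_col_def flip: power_int_add)
    then show ?thesis
      using 2 ne by (simp add: D_def m_def wt_diag_def Let_def)
  next
    case 3
    define m where "m = min ((2 * int n - 2 - fst x) div 2) ((2 * int n - 1 - snd x) div 2)"
    have "diag_index y + 1 = t"
      unfolding 3 diag_index_def uv t_def by (simp add: vsub_def e2_def)
    then have "2 * int n - fst x = D + (2 * m + 1)"
      using gauge_exp_Suc[of "diag_index y"] dx by (simp add: D_def m_def uv t_def) arith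
    then have "wt_col n a q x y = q powi D * (a * q powi (2 * m + 1))"
      using 3 ne q by (simp add: wt_col_def flip: power_int_add)
    then show ?thesis
      using 3 ne by (simp add: D_def m_def wt_diag_def Let_def)
  qed
qed

lemma perfect_matching_bij_fst:
  assumes "M \<in> perfect_matchings Bv Wv"
  shows "bij_betw fst M Bv"
proof (rule bij_betw_imageI)
  from assms have sub: "M \<subseteq> Bv \<times> Wv" and uniq: "\<forall>x\<in>Bv. \<exists>!y. (x, y) \<in> M"
    unfolding perfect_matchings_def by auto
  show "inj_on fst M"
    using sub uniq by (fastforce intro: inj_onI)
  show "fst ` M = Bv"
    using sub uniq by force
qed

lemma perfect_matching_bij_snd:
  assumes "M \<in> perfect_matchings Bv Wv"
  shows "bij_betw snd M Wv"
proof (rule bij_betw_imageI)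
  from assms have sub: "M \<subseteq> Bv \<times> Wv" and uniq: "\<forall>y\<in>Wv. \<exists>!x. (x, y) \<in> M"
    unfolding perfect_matchings_def by auto
  show "inj_on snd M"
    using sub uniq by (fastforce intro: inj_onI)
  show "snd ` M = Wv"
    using sub uniq by force
qed

lemma part_fun_gauge:
  assumes "\<And>x y. x \<in> Bv \<Longrightarrow> adj x y \<Longrightarrow> wc x y = f x * g y * wd x y"
  shows "part_fun Bv Wv wc = (\<Prod>x\<in>Bv. f x) * (\<Prod>y\<in>Wv. g y) * part_fun Bv Wv wd"
  unfolding part_fun_def sum_distrib_left
proof (rule sum.cong[OF refl])
  fix M assume M: "M \<in> perfect_matchings Bv Wv"
  have "(\<Prod>(x, y)\<in>M. wc x y) = (\<Prod>p\<in>M. f (fst p) * g (snd p) * wd (fst p) (snd p))"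
  proof (rule prod.cong[OF refl])
    fix p assume "p \<in> M"
    then have "fst p \<in> Bv" "adj (fst p) (snd p)"
      using M unfolding perfect_matchings_def by (auto simp: case_prod_beta)
    then show "(case p of (x, y) \<Rightarrow> wc x y) = f (fst p) * g (snd p) * wd (fst p) (snd p)"
      by (simp add: assms case_prod_beta)
  qed
  also have "\<dots> = (\<Prod>p\<in>M. f (fst p)) * (\<Prod>p\<in>M. g (snd p)) * (\<Prod>(x, y)\<in>M. wd x y)"
    by (simp add: prod.distrib case_prod_beta)
  also have "\<dots> = (\<Prod>x\<in>Bv. f x) * (\<Prod>y\<in>Wv. g y) * (\<Prod>(x, y)\<in>M. wd x y)"
    using prod.reindex_bij_betw[OF perfect_matching_bij_fst[OF M], of f]
      prod.reindex_bij_betw[OF perfect_matching_bij_snd[OF M], of g] by simp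
  finally show "(\<Prod>(x, y)\<in>M. wc x y) = (\<Prod>x\<in>Bv. f x) * (\<Prod>y\<in>Wv. g y) * (\<Prod>(x, y)\<in>M. wd x y)" .
qed

lemma part_fun_remove_ratio_gauge:
  assumes "finite Bv" "finite Wv" "xb \<in> Bv" "yw \<in> Wv"
    and nz: "\<And>x. x \<in> Bv \<Longrightarrow> f x \<noteq> 0" "\<And>y. y \<in> Wv \<Longrightarrow> g y \<noteq> 0"
    and gauge: "\<And>x y. x \<in> Bv \<Longrightarrow> adj x y \<Longrightarrow> wc x y = f x * g y * wd x y"
  shows "part_fun (Bv - {xb}) (Wv - {yw}) wc / part_fun Bv Wv wc =
    part_fun (Bv - {xb}) (Wv - {yw}) wd / part_fun Bv Wv wd / (f xb * g yw)"
proof -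
  define PB where "PB = (\<Prod>x\<in>Bv - {xb}. f x)"
  define PW where "PW = (\<Prod>y\<in>Wv - {yw}. g y)"
  have "part_fun Bv Wv wc = (\<Prod>x\<in>Bv. f x) * (\<Prod>y\<in>Wv. g y) * part_fun Bv Wv wd"
    using gauge by (rule part_fun_gauge)
  then have "part_fun Bv Wv wc = f xb * PB * (g yw * PW) * part_fun Bv Wv wd"
    unfolding PB_def PW_def prod.remove[OF assms(1,3)] prod.remove[OF assms(2,4)] .
  moreover have "part_fun (Bv - {xb}) (Wv - {yw}) wc = PB * PW * part_fun (Bv - {xb}) (Wv - {yw}) wd"
    unfolding PB_def PW_def using gauge by (intro part_fun_gauge) auto
  moreover have "PB \<noteq> 0" "PW \<noteq> 0"
    unfolding PB_def PW_def using assms(1,2) nz by auto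
  ultimately show ?thesis
    by (simp add: field_simps)
qed

lemma finite_black_vtx: "finite (black_vtx n)"
proof (rule finite_subset)
  show "black_vtx n \<subseteq> {0..2 * int n} \<times> {1..2 * int n - 1}"
    unfolding black_vtx_def by auto
qed simp

lemma finite_white_vtx: "finite (white_vtx n)"
proof (rule finite_subset)
  show "white_vtx n \<subseteq> {1..2 * int n - 1} \<times> {0..2 * int n}"
    unfolding white_vtx_def by auto
qed simp

lemma Z_col_rm_div_Z_col:
  assumes "i < n" "j < n" "q \<noteq> 0"
  shows "Z_col_rm i j a q n / Z_col n a q =
    q ^ ((i + 1)^2 + j) * (Z_diag_rm i j a q n / Z_diag n a q)"
proof -
  define xb where "xb = (2 * int n, 2 * int n - 1 - 2 * int j)"
  define yw where "yw = (2 * int n - 2 * int i - 1, 2 * int n)"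
  define f where "f x = q powi gauge_exp (diag_index x)" for x
  define g where "g y = q powi - gauge_exp (diag_index y)" for y
  have "xb \<in> black_vtx n" "yw \<in> white_vtx n"
    using assms unfolding xb_def yw_def black_vtx_def white_vtx_def by auto
  moreover have "wt_col n a q x y = f x * g y * wt_diag n a q x y"
    if "x \<in> black_vtx n" "adj x y" for x y
  proof -
    have "even (fst x)" "odd (snd x)"
      using that(1) unfolding black_vtx_def by auto
    from wt_col_gauge[OF this that(2) \<open>q \<noteq> 0\<close>] show ?thesis
      using \<open>q \<noteq> 0\<close> by (simp add: f_def g_def power_int_diff power_int_minus divide_inverse)
  qed
  ultimately have "Z_col_rm i j a q n / Z_col n a q =
      Z_diag_rm i j a q n / Z_diag n a q / (f xb * g yw)"
    unfolding Z_col_rm_def Z_col_def Z_diag_rm_def Z_diag_def xb_def yw_def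
    using finite_black_vtx finite_white_vtx \<open>q \<noteq> 0\<close>
    by (subst part_fun_remove_ratio_gauge[where f = f and g = g])
      (auto simp: f_def g_def algebra_simps)
  moreover have "f xb * g yw = inverse (q ^ ((i + 1)^2 + j))"
  proof -
    have "diag_index xb = - int j" "diag_index yw = int (i + 1)"
      unfolding xb_def yw_def diag_index_def by simp_all
    then have xb_exp: "gauge_exp (diag_index xb) = - int j"
      and yw_exp: "gauge_exp (diag_index yw) = int ((i + 1)^2)"
      unfolding gauge_exp_def by simp_all
    show ?thesis
      unfolding f_def g_def xb_exp yw_exp power_int_minus power_int_of_nat by (simp add: power_add)
  qed
  ultimately show ?thesis
    by (simp add: divide_inverse mult.commute)
qed

lemma has_contour_integral_power_div_power_circlepath:
  assumes "r > 0"
  shows "((\<lambda>w::complex. w ^ k / w ^ Suc m) has_contour_integral (if k = m then 2 * pi * \<i> else 0))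
    (circlepath 0 r)"
proof (cases "m \<le> k")
  case True
  then obtain d where k: "k = m + d"
    using le_Suc_ex by blast
  have residue_eq: "2 * pi * \<i> / fact 0 * (deriv ^^ 0) (\<lambda>w. w ^ d) 0 = (if k = m then 2 * pi * \<i> else 0)"
    using k by simp
  have "((\<lambda>w. w ^ d / (w - 0) ^ Suc 0) has_contour_integral
      2 * pi * \<i> / fact 0 * (deriv ^^ 0) (\<lambda>w. w ^ d) 0) (circlepath 0 r)"
    by (rule Cauchy_has_contour_integral_higher_derivative_circlepath)
      (use assms in \<open>auto intro!: holomorphic_intros continuous_intros\<close>)
  then show ?thesis
    unfolding residue_eq by (rule has_contour_integral_eq) (use assms in \<open>auto simp: k power_add\<close>)
next
  case False
  then obtain d where m: "m = k + Suc d"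
    using less_imp_Suc_add by (metis add_Suc_right not_le)
  have "((\<lambda>w. 1 / (w - 0) ^ Suc (Suc d)) has_contour_integral
      2 * pi * \<i> / fact (Suc d) * (deriv ^^ Suc d) (\<lambda>w. 1) 0) (circlepath 0 r)"
    by (rule Cauchy_has_contour_integral_higher_derivative_circlepath) (use assms in auto)
  then have "((\<lambda>w. 1 / (w - 0) ^ Suc (Suc d)) has_contour_integral (if k = m then 2 * pi * \<i> else 0))
      (circlepath 0 r)"
    using m by simp
  then show ?thesis
    by (rule has_contour_integral_eq) (use assms in \<open>auto simp: m power_add\<close>)
qed

lemma has_contour_integral_coeff_circlepath:
  assumes "r > 0" "m < n"
  shows "((\<lambda>w. (\<Sum>k<n. c k * w ^ k) / w ^ Suc m) has_contour_integral 2 * pi * \<i> * c m)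
    (circlepath 0 r)"
proof -
  have "((\<lambda>w. \<Sum>k<n. c k * (w ^ k / w ^ Suc m)) has_contour_integral
      (\<Sum>k<n. c k * (if k = m then 2 * pi * \<i> else 0))) (circlepath 0 r)"
    by (intro has_contour_integral_sum has_contour_integral_lmul finite_lessThan
        has_contour_integral_power_div_power_circlepath assms(1))
  moreover have "(\<Sum>k<n. c k * (if k = m then 2 * pi * \<i> else 0)) = 2 * pi * \<i> * c m"
    using assms(2) by (simp add: if_distrib[of "\<lambda>z. _ * z"] sum.delta' cong: if_cong)
  ultimately show ?thesis
    by (simp add: sum_divide_distrib)
qed

lemma contour_integral_circlepath_double_coeff:
  fixes C :: "nat \<Rightarrow> nat \<Rightarrow> complex"
  assumes "i < n" "j < n" "r1 > 0" "r2 > 0"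
  shows "contour_integral (circlepath 0 r2) (\<lambda>b.
      contour_integral (circlepath 0 r1) (\<lambda>w.
        (\<Sum>i'<n. \<Sum>j'<n. C i' j' * w ^ i' * b ^ j') / (w ^ i * b ^ j) / w / b))
    = (2 * pi * \<i>) ^ 2 * C i j"
proof -
  define P where "P b i' = (\<Sum>j'<n. C i' j' * b ^ j')" for b i'
  have integrand: "(\<Sum>i'<n. \<Sum>j'<n. C i' j' * w ^ i' * b ^ j') / (w ^ i * b ^ j) / w / b =
      1 / b ^ Suc j * ((\<Sum>i'<n. P b i' * w ^ i') / w ^ Suc i)" for w b
    unfolding P_def by (simp add: sum_distrib_left divide_inverse inverse_mult_distrib mult_ac)
  have inner: "contour_integral (circlepath 0 r1) (\<lambda>w.
      (\<Sum>i'<n. \<Sum>j'<n. C i' j' * w ^ i' * b ^ j') / (w ^ i * b ^ j) / w / b)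
      = 2 * pi * \<i> * (P b i / b ^ Suc j)" for b
  proof -
    have "((\<lambda>w. 1 / b ^ Suc j * ((\<Sum>i'<n. P b i' * w ^ i') / w ^ Suc i)) has_contour_integral
        1 / b ^ Suc j * (2 * pi * \<i> * P b i)) (circlepath 0 r1)"
      by (intro has_contour_integral_lmul has_contour_integral_coeff_circlepath assms(1,3))
    then show ?thesis
      unfolding integrand by (simp add: contour_integral_unique)
  qed
  have "((\<lambda>b. 2 * pi * \<i> * (P b i / b ^ Suc j)) has_contour_integral
      2 * pi * \<i> * (2 * pi * \<i> * C i j)) (circlepath 0 r2)"
    unfolding P_def by (intro has_contour_integral_lmul has_contour_integral_coeff_circlepath assms(2,4))
  then show ?thesis
    unfolding inner by (simp add: contour_integral_unique power2_eq_square)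
qed

theorem lemma5p4:
  fixes n i j :: nat and a q r1 r2 :: real
  assumes "i < n" and "j < n" and "a > 0" and "q > 0" and "r1 > 0" and "r2 > 0"
  shows "complex_of_real (Z_col_rm i j a q n / Z_col n a q) =
    1 / (2 * pi * \<i>) ^ 2 *
      contour_integral (circlepath 0 r2) (\<lambda>b.
        contour_integral (circlepath 0 r1) (\<lambda>w.
          complex_of_real (q ^ ((i + 1)^2 + j)) * G_diag_NE n w b a q / (w ^ i * b ^ j)
            / w / b))"
proof -
  define C where "C i' j' = complex_of_real (q ^ ((i + 1)^2 + j)) *
    complex_of_real (Z_diag_rm i' j' a q n / Z_diag n a q)" for i' j'
  have "complex_of_real (q ^ ((i + 1)^2 + j)) * G_diag_NE n w b a q =
      (\<Sum>i'<n. \<Sum>j'<n. C i' j' * w ^ i' * b ^ j')" for w b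
    unfolding G_diag_NE_def C_def by (simp add: sum_distrib_left mult_ac)
  moreover have "complex_of_real (Z_col_rm i j a q n / Z_col n a q) = C i j"
    unfolding C_def using Z_col_rm_div_Z_col[OF \<open>i < n\<close> \<open>j < n\<close>] \<open>q > 0\<close> by simp
  ultimately show ?thesis
    using contour_integral_circlepath_double_coeff[OF assms(1,2,5,6), of C] by simp
qed

end
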